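(* Let $SC\subset[0,1]^2$ be the Sierpiński carpet. Then $S(SC)=\{(0,0)\}$. Consequently, $SC$ is not the achievement set $E(v_n)$ of any sequence $(v_n)$ in $\mathbb R^2$ with $\sum_n v_n$ absolutely convergent.
   Context: The Sierpiński carpet is the set of points $(s,t)\in[0,1]^2$ admitting ternary expansions $s=\sum_{i\ge1}a_i3^{-i}$, $t=\sum_{i\ge1}b_i3^{-i}$ ($a_i,b_i\in\{0,1,2\}$) with no index $i$ such that $a_i=b_i=1$; equivalently, it is obtained from $[0,1]^2$ by dividing into nine congruent subsquares, removing the open middle one, and iterating on the remaining squares. For an absolutely convergent series $\sum_n v_n$ in $\mathbb R^2$, $E(v_n)=\{\sum_{n=1}^\infty \varepsilon_n v_n : (\varepsilon_n)\in\{0,1\}^{\mathbb N}\}$. For $A\subset\mathbb R^2$, the spectre of $A$ is $S(A)=\{x\in \mathbb R^2:\ \forall y\in A,\ y+x\in A\text{ or }y-x\in A\}$. *)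

theory Defs
  imports "HOL-Analysis.Analysis"
begin

text \<open>Points of the plane are pairs of reals. Sequences are indexed from 0
  (index i corresponds to the paper's index i+1).\<close>

definition sierpinski_carpet :: "(real \<times> real) set" where
  "sierpinski_carpet = {(s, t). \<exists>a b :: nat \<Rightarrow> nat.
      (\<forall>i. a i \<le> 2 \<and> b i \<le> 2) \<and>
      s = (\<Sum>i. real (a i) / 3 ^ (Suc i)) \<and>
      t = (\<Sum>i. real (b i) / 3 ^ (Suc i)) \<and>
      \<not> (\<exists>i. a i = 1 \<and> b i = 1)}"

definition achievement_set :: "(nat \<Rightarrow> real \<times> real) \<Rightarrow> (real \<times> real) set" where
  "achievement_set v = {(\<Sum>n. if \<epsilon> n then v n else 0) | \<epsilon> :: nat \<Rightarrow> bool. True}"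

definition spectre :: "(real \<times> real) set \<Rightarrow> (real \<times> real) set" where
  "spectre A = {x. \<forall>y\<in>A. y + x \<in> A \<or> y - x \<in> A}"

end

theory Submission
  imports Defs
begin

text \<open>
  Every term \<open>v\<^sub>n\<close> of an absolutely convergent series lies in the spectre of its achievement
  set: toggling \<open>\<epsilon>\<^sub>n\<close> moves a subsum by \<open>\<plusminus>v\<^sub>n\<close>. So it suffices to show that the spectre of the
  carpet is trivial, because then all \<open>v\<^sub>n\<close> vanish and the achievement set collapses to a point.

  The carpet lies in the unit square and is symmetric under \<open>(s, t) \<mapsto> (t, s)\<close>. A vector
  \<open>(p, q)\<close> with \<open>p q \<noteq> 0\<close> pushes the corner \<open>(0, 0)\<close> or \<open>(0, 1)\<close> out of the square in both
  directions. For a horizontal vector \<open>(p, 0)\<close> with \<open>p > 0\<close>, choose \<open>j\<close> with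
  \<open>3\<^sup>j p \<in> [1/5, 3/5)\<close> and a carpet point whose translate by \<open>-p\<close> leaves the square while its
  translate by \<open>+p\<close> falls into a middle square removed at level \<open>j\<close>.
\<close>

subsection \<open>Ternary expansions\<close>

definition ternary_value :: "(nat \<Rightarrow> nat) \<Rightarrow> real" where
  "ternary_value a = (\<Sum>i. real (a i) / 3 ^ Suc i)"

lemma sums_two_div_pow3: "(\<lambda>i. 2 / 3 ^ Suc i :: real) sums 1"
proof -
  have "(\<lambda>i. (2/3) * (1/3::real) ^ i) sums ((2/3) * (1 / (1 - 1/3)))"
    by (intro sums_mult geometric_sums) simp
  moreover have "(\<lambda>i. (2/3) * (1/3::real) ^ i) = (\<lambda>i. 2 / 3 ^ Suc i)"
    by (auto simp: field_simps)
  ultimately show ?thesis by simp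
qed

lemma summable_ternary:
  assumes "\<forall>i. a i \<le> 2"
  shows "summable (\<lambda>i. real (a i) / 3 ^ Suc i)"
  by (rule summable_comparison_test[OF _ sums_summable[OF sums_two_div_pow3]])
     (use assms in \<open>auto intro!: divide_right_mono\<close>)

lemma ternary_value_bounds:
  assumes "\<forall>i. a i \<le> 2"
  shows "0 \<le> ternary_value a" "ternary_value a \<le> 1"
proof -
  show "0 \<le> ternary_value a"
    unfolding ternary_value_def by (rule suminf_nonneg[OF summable_ternary[OF assms]]) simp
  have "ternary_value a \<le> (\<Sum>i. 2 / 3 ^ Suc i :: real)"
    unfolding ternary_value_def
    by (rule suminf_le[OF _ summable_ternary[OF assms] sums_summable[OF sums_two_div_pow3]])
       (use assms in \<open>auto intro!: divide_right_mono\<close>)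
  then show "ternary_value a \<le> 1"
    using sums_unique[OF sums_two_div_pow3] by simp
qed

lemma ternary_value_const_0: "ternary_value (\<lambda>_. 0) = 0"
  by (simp add: ternary_value_def)

lemma ternary_value_const_2: "ternary_value (\<lambda>_. 2) = 1"
  using sums_unique[OF sums_two_div_pow3] by (simp add: ternary_value_def)

lemma ternary_value_shift:
  assumes "\<forall>i. a i \<le> 2"
  shows "ternary_value a = (\<Sum>i<k. real (a i) / 3 ^ Suc i) + ternary_value (\<lambda>i. a (i + k)) / 3 ^ k"
proof -
  have "ternary_value (\<lambda>i. a (i + k)) / 3 ^ k = (\<Sum>i. real (a (i + k)) / 3 ^ Suc i / 3 ^ k)"
    unfolding ternary_value_def
    by (rule suminf_divide[symmetric], rule summable_ternary) (use assms in auto)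
  also have "\<dots> = (\<Sum>i. real (a (i + k)) / 3 ^ Suc (i + k))"
    by (simp add: power_add field_simps)
  finally show ?thesis
    using suminf_split_initial_segment[OF summable_ternary[OF assms], of k]
    by (simp add: ternary_value_def)
qed

lemma ternary_value_Cons:
  assumes "d \<le> 2" "\<forall>i. a i \<le> 2"
  shows "ternary_value (case_nat d a) = (real d + ternary_value a) / 3"
proof -
  have "\<forall>i. case_nat d a i \<le> 2"
    using assms by (simp split: nat.split)
  from ternary_value_shift[OF this, of 1] show ?thesis
    by (simp add: add_divide_distrib)
qed

lemma pow3_mult_ternary_value:
  assumes "\<forall>i. a i \<le> 2"
  obtains n :: int where "3 ^ k * ternary_value a = of_int n + ternary_value (\<lambda>i. a (i + k))"
proof
  have "3 ^ k * (\<Sum>i<k. real (a i) / 3 ^ Suc i) = (\<Sum>i<k. real (a i) * 3 ^ (k - Suc i))"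
    unfolding sum_distrib_left
  proof (rule sum.cong)
    fix i assume "i \<in> {..<k}"
    then have "(3::real) ^ k = 3 ^ (k - Suc i) * 3 ^ Suc i"
      by (metis Suc_leI le_add_diff_inverse2 lessThan_iff power_add)
    then show "3 ^ k * (real (a i) / 3 ^ Suc i) = real (a i) * 3 ^ (k - Suc i)"
      by simp
  qed simp
  then show "3 ^ k * ternary_value a =
      of_int (\<Sum>i<k. int (a i) * 3 ^ (k - Suc i)) + ternary_value (\<lambda>i. a (i + k))"
    by (subst ternary_value_shift[OF assms, of k]) (simp add: distrib_left)
qed

lemma ternary_digit_eq_1:
  assumes "\<forall>i. a i \<le> 2"
    and "1/3 < 3 ^ k * ternary_value a - of_int m" "3 ^ k * ternary_value a - of_int m < 2/3"
  shows "a k = 1"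
proof -
  let ?a = "\<lambda>i. a (i + k + 1)"
  obtain n :: int where n: "3 ^ k * ternary_value a = of_int n + ternary_value (\<lambda>i. a (i + k))"
    using pow3_mult_ternary_value[OF assms(1)] .
  have "0 \<le> ternary_value (\<lambda>i. a (i + k))" "ternary_value (\<lambda>i. a (i + k)) \<le> 1"
    using assms(1) by (simp_all add: ternary_value_bounds)
  then have "-1 < real_of_int (m - n)" "real_of_int (m - n) < 1"
    using n assms(2,3) by auto
  then have "m = n"
    by linarith
  then have mid: "1/3 < ternary_value (\<lambda>i. a (i + k))" "ternary_value (\<lambda>i. a (i + k)) < 2/3"
    using n assms(2,3) by auto
  have "(\<lambda>i. a (i + k)) = case_nat (a k) ?a"
    by (auto split: nat.split)
  then have "ternary_value (\<lambda>i. a (i + k)) = (real (a k) + ternary_value ?a) / 3"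
    using assms(1) by (simp add: ternary_value_Cons)
  moreover have "0 \<le> ternary_value ?a" "ternary_value ?a \<le> 1"
    using assms(1) by (simp_all add: ternary_value_bounds)
  moreover have "a k = 0 \<or> a k = 1 \<or> a k = 2"
    using assms(1) by (metis le_antisym not_less_eq_eq numeral_2_eq_2 One_nat_def le_0_eq)
  ultimately show ?thesis
    using mid by auto
qed

subsection \<open>The carpet\<close>

lemma mem_carpet_iff:
  "(s, t) \<in> sierpinski_carpet \<longleftrightarrow> (\<exists>a b. (\<forall>i. a i \<le> 2 \<and> b i \<le> 2) \<and>
     s = ternary_value a \<and> t = ternary_value b \<and> (\<forall>i. \<not> (a i = 1 \<and> b i = 1)))"
  unfolding sierpinski_carpet_def ternary_value_def by auto

lemma carpet_subset_unit_square:
  assumes "(s, t) \<in> sierpinski_carpet"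
  shows "0 \<le> s" "s \<le> 1" "0 \<le> t" "t \<le> 1"
  using assms ternary_value_bounds unfolding mem_carpet_iff by metis+

lemma carpet_swap:
  assumes "(s, t) \<in> sierpinski_carpet"
  shows "(t, s) \<in> sierpinski_carpet"
proof -
  obtain a b where "\<forall>i. a i \<le> 2 \<and> b i \<le> 2" "s = ternary_value a" "t = ternary_value b"
      "\<forall>i. \<not> (a i = 1 \<and> b i = 1)"
    using assms unfolding mem_carpet_iff by blast
  then show ?thesis
    unfolding mem_carpet_iff by (intro exI[of _ b] exI[of _ a]) auto
qed

lemma zero_zero_mem_carpet: "(0, 0) \<in> sierpinski_carpet"
  unfolding mem_carpet_iff
  by (intro exI[of _ "\<lambda>_. 0"]) (simp add: ternary_value_const_0)

lemma zero_one_mem_carpet: "(0, 1) \<in> sierpinski_carpet"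
  unfolding mem_carpet_iff
  by (intro exI[of _ "\<lambda>_. 0"] exI[of _ "\<lambda>_. 2"]) (simp add: ternary_value_const_0 ternary_value_const_2)

lemma carpet_self_similar:
  assumes "(s, t) \<in> sierpinski_carpet" "d \<le> 2" "e \<le> 2" "\<not> (d = 1 \<and> e = 1)"
  shows "((real d + s) / 3, (real e + t) / 3) \<in> sierpinski_carpet"
proof -
  obtain a b where ab: "\<forall>i. a i \<le> 2 \<and> b i \<le> 2" "s = ternary_value a" "t = ternary_value b"
      "\<forall>i. \<not> (a i = 1 \<and> b i = 1)"
    using assms(1) unfolding mem_carpet_iff by blast
  show ?thesis
    unfolding mem_carpet_iff
  proof (intro exI conjI)
    show "\<forall>i. case_nat d a i \<le> 2 \<and> case_nat e b i \<le> 2"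
      "\<forall>i. \<not> (case_nat d a i = 1 \<and> case_nat e b i = 1)"
      using ab(1,4) assms(2-4) by (simp_all split: nat.split)
    show "(real d + s) / 3 = ternary_value (case_nat d a)"
      "(real e + t) / 3 = ternary_value (case_nat e b)"
      using ab(1-3) assms(2,3) by (simp_all add: ternary_value_Cons)
  qed
qed

lemma carpet_div_pow3:
  assumes "(s, t) \<in> sierpinski_carpet"
  shows "(s / 3 ^ j, t / 3 ^ j) \<in> sierpinski_carpet"
proof (induction j)
  case (Suc j)
  from carpet_self_similar[OF this, of 0 0] show ?case
    by (simp add: field_simps)
qed (use assms in simp)

text \<open>The hypotheses describe the open middle square of the level-\<open>k\<close> grid cell with lower
  left corner \<open>(m\<^sub>1, m\<^sub>2) / 3\<^sup>k\<close>.\<close>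

lemma not_mem_carpet_middle_square:
  assumes "1/3 < 3 ^ k * s - of_int m\<^sub>1" "3 ^ k * s - of_int m\<^sub>1 < 2/3"
    and "1/3 < 3 ^ k * t - of_int m\<^sub>2" "3 ^ k * t - of_int m\<^sub>2 < 2/3"
  shows "(s, t) \<notin> sierpinski_carpet"
proof
  assume "(s, t) \<in> sierpinski_carpet"
  then obtain a b where ab: "\<forall>i. a i \<le> 2 \<and> b i \<le> 2" "s = ternary_value a" "t = ternary_value b"
      "\<forall>i. \<not> (a i = 1 \<and> b i = 1)"
    unfolding mem_carpet_iff by blast
  have "a k = 1" "b k = 1"
    using ternary_digit_eq_1[of a k m\<^sub>1] ternary_digit_eq_1[of b k m\<^sub>2] ab(1-3) assms by auto
  with ab(4) show False
    by blast
qed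

subsection \<open>The spectre of the carpet\<close>

lemma exists_pow3_scaling:
  fixes p :: real
  assumes "0 < p" "p < 3/5"
  obtains j :: nat where "1/5 \<le> 3 ^ j * p" "3 ^ j * p < 3/5"
proof -
  obtain n :: nat where "1 / (5 * p) < 3 ^ n"
    using real_arch_pow[of 3 "1 / (5 * p)"] by auto
  then have ex: "1/5 \<le> 3 ^ n * p"
    using assms by (simp add: field_simps)
  define j where "j = (LEAST n. 1/5 \<le> 3 ^ n * p)"
  have "1/5 \<le> 3 ^ j * p"
    unfolding j_def by (rule LeastI[of _ n]) (rule ex)
  moreover have "3 ^ j * p < 3/5"
  proof (cases j)
    case (Suc i)
    then have "\<not> 1/5 \<le> 3 ^ i * p"
      unfolding j_def by (intro not_less_Least) (simp add: j_def)
    then show ?thesis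
      using Suc by (auto simp: algebra_simps)
  qed (use assms in simp)
  ultimately show ?thesis
    using that by blast
qed

lemma carpet_point_with_translates_outside:
  assumes "0 < p"
  obtains s t where "(s, t) \<in> sierpinski_carpet"
    "(s + p, t) \<notin> sierpinski_carpet" "(s - p, t) \<notin> sierpinski_carpet"
proof (cases "3/5 \<le> p")
  case True
  have "(5/9, 0) \<in> sierpinski_carpet"
    using carpet_self_similar[OF carpet_self_similar[OF zero_zero_mem_carpet, of 2 0], of 1 0]
    by simp
  moreover have "(5/9 + p, 0) \<notin> sierpinski_carpet" "(5/9 - p, 0) \<notin> sierpinski_carpet"
    using carpet_subset_unit_square(1,2) True by force+
  ultimately show ?thesis
    using that by blast
next
  case False
  then obtain j where j: "1/5 \<le> 3 ^ j * p" "3 ^ j * p < 3/5"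
    using exists_pow3_scaling assms by (metis linorder_not_less)
  have pos: "(0::real) < 3 ^ j"
    by simp
  show ?thesis
  proof (cases "3 ^ j * p \<le> 1/3")
    case True
    have "(4/27, 17/27) \<in> sierpinski_carpet"
      using carpet_self_similar[OF carpet_self_similar[OF carpet_self_similar[OF
          zero_zero_mem_carpet, of 1 2], of 1 2], of 0 1]
      by simp
    from carpet_div_pow3[OF this, of j]
    have "(4/27 / 3 ^ j, 17/27 / 3 ^ j) \<in> sierpinski_carpet" .
    moreover have "(4/27 / 3 ^ j + p, 17/27 / 3 ^ j) \<notin> sierpinski_carpet"
      by (rule not_mem_carpet_middle_square[of j _ 0 _ 0]) (use pos j True in \<open>simp_all add: field_simps\<close>)
    moreover have "(4/27 / 3 ^ j - p, 17/27 / 3 ^ j) \<notin> sierpinski_carpet"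
    proof -
      have "4/27 < 3 ^ j * p"
        using j by simp
      then have "4/27 / 3 ^ j - p < 0"
        using pos by (simp add: field_simps)
      then show ?thesis
        using carpet_subset_unit_square(1) by force
    qed
    ultimately show ?thesis
      using that by blast
  next
    case False
    have "(0, 4/9) \<in> sierpinski_carpet"
      using carpet_self_similar[OF carpet_self_similar[OF zero_zero_mem_carpet, of 0 1], of 0 1]
      by simp
    from carpet_div_pow3[OF this, of j]
    have "(0, 4/9 / 3 ^ j) \<in> sierpinski_carpet"
      by simp
    moreover have "(0 + p, 4/9 / 3 ^ j) \<notin> sierpinski_carpet"
      by (rule not_mem_carpet_middle_square[of j _ 0 _ 0]) (use pos j False in simp_all)
    moreover have "(0 - p, 4/9 / 3 ^ j) \<notin> sierpinski_carpet"
      using carpet_subset_unit_square(1) assms by force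
    ultimately show ?thesis
      using that by blast
  qed
qed

lemma spectre_carpet_swap:
  assumes "(p, q) \<in> spectre sierpinski_carpet"
  shows "(q, p) \<in> spectre sierpinski_carpet"
  unfolding spectre_def
proof (intro CollectI ballI)
  fix y assume "y \<in> sierpinski_carpet"
  obtain s t where y: "y = (s, t)"
    by fastforce
  have "(t, s) + (p, q) \<in> sierpinski_carpet \<or> (t, s) - (p, q) \<in> sierpinski_carpet"
    using assms carpet_swap \<open>y \<in> sierpinski_carpet\<close> y unfolding spectre_def by blast
  then show "y + (q, p) \<in> sierpinski_carpet \<or> y - (q, p) \<in> sierpinski_carpet"
    using carpet_swap y by auto
qed

lemma horizontal_notin_spectre_carpet:
  assumes "p \<noteq> 0"
  shows "(p, 0) \<notin> spectre sierpinski_carpet"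
proof -
  obtain s t where st: "(s, t) \<in> sierpinski_carpet"
      "(s + \<bar>p\<bar>, t) \<notin> sierpinski_carpet" "(s - \<bar>p\<bar>, t) \<notin> sierpinski_carpet"
    using carpet_point_with_translates_outside[of "\<bar>p\<bar>"] assms by auto
  then have "(s, t) + (p, 0) \<notin> sierpinski_carpet \<and> (s, t) - (p, 0) \<notin> sierpinski_carpet"
    by (cases "0 < p") auto
  with st(1) show ?thesis
    unfolding spectre_def by blast
qed

lemma oblique_notin_spectre_carpet:
  assumes "p \<noteq> 0" "q \<noteq> 0"
  shows "(p, q) \<notin> spectre sierpinski_carpet"
proof
  assume "(p, q) \<in> spectre sierpinski_carpet"
  then have "(p, q) \<in> sierpinski_carpet \<or> (- p, - q) \<in> sierpinski_carpet"
      "(p, 1 + q) \<in> sierpinski_carpet \<or> (- p, 1 - q) \<in> sierpinski_carpet"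
    using zero_zero_mem_carpet zero_one_mem_carpet unfolding spectre_def by force+
  then have "0 \<le> p \<and> 0 \<le> q \<or> p \<le> 0 \<and> q \<le> 0" "0 \<le> p \<and> q \<le> 0 \<or> p \<le> 0 \<and> 0 \<le> q"
    by (auto dest: carpet_subset_unit_square)
  with assms show False
    by linarith
qed

lemma spectre_carpet: "spectre sierpinski_carpet = {(0, 0)}"
proof (intro equalityI subsetI)
  fix x assume x: "x \<in> spectre sierpinski_carpet"
  obtain p q where pq: "x = (p, q)"
    by fastforce
  have "q = 0"
  proof (rule ccontr)
    assume "q \<noteq> 0"
    then show False
      using x pq spectre_carpet_swap horizontal_notin_spectre_carpet oblique_notin_spectre_carpet
      by (cases "p = 0") blast+
  qed
  moreover have "p = 0"
    using x pq \<open>q = 0\<close> horizontal_notin_spectre_carpet by blast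
  ultimately show "x \<in> {(0, 0)}"
    using pq by simp
qed (simp add: spectre_def flip: zero_prod_def)

subsection \<open>Achievement sets\<close>

lemma achievement_sum_toggle:
  fixes v :: "nat \<Rightarrow> 'a :: banach"
  assumes "summable (\<lambda>i. norm (v i))"
  shows "(\<Sum>i. if (\<epsilon>(n := True)) i then v i else 0) = (\<Sum>i. if (\<epsilon>(n := False)) i then v i else 0) + v n"
proof -
  have "summable (\<lambda>i. if (\<epsilon>(n := False)) i then v i else 0)"
    by (rule summable_norm_cancel, rule summable_comparison_test[OF _ assms]) auto
  from sums_add[OF summable_sums[OF this] sums_single[of n v]]
  have "(\<lambda>i. (if (\<epsilon>(n := False)) i then v i else 0) + (if i = n then v i else 0)) sums
      ((\<Sum>i. if (\<epsilon>(n := False)) i then v i else 0) + v n)" .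
  moreover have "(\<lambda>i. (if (\<epsilon>(n := False)) i then v i else 0) + (if i = n then v i else 0)) =
      (\<lambda>i. if (\<epsilon>(n := True)) i then v i else 0)"
    by auto
  ultimately show ?thesis
    by (simp add: sums_iff)
qed

lemma term_mem_spectre_achievement_set:
  assumes "summable (\<lambda>i. norm (v i))"
  shows "v n \<in> spectre (achievement_set v)"
  unfolding spectre_def
proof (intro CollectI ballI)
  fix y assume "y \<in> achievement_set v"
  then obtain \<epsilon> where y: "y = (\<Sum>i. if \<epsilon> i then v i else 0)"
    unfolding achievement_set_def by blast
  show "y + v n \<in> achievement_set v \<or> y - v n \<in> achievement_set v"
  proof (cases "\<epsilon> n")
    case True
    then have "y - v n = (\<Sum>i. if (\<epsilon>(n := False)) i then v i else 0)"
      using achievement_sum_toggle[OF assms, of \<epsilon> n] y by (simp add: fun_upd_idem)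
    then show ?thesis
      unfolding achievement_set_def by blast
  next
    case False
    then have "y + v n = (\<Sum>i. if (\<epsilon>(n := True)) i then v i else 0)"
      using achievement_sum_toggle[OF assms, of \<epsilon> n] y by (simp add: fun_upd_idem)
    then show ?thesis
      unfolding achievement_set_def by blast
  qed
qed

lemma achievement_set_zero: "achievement_set (\<lambda>_. 0) = {0}"
  unfolding achievement_set_def by simp

theorem mainTheorem19:
  shows "spectre sierpinski_carpet = {(0, 0)} \<and>
         \<not> (\<exists>v :: nat \<Rightarrow> real \<times> real. summable (\<lambda>n. norm (v n)) \<and>
               sierpinski_carpet = achievement_set v)"
proof (intro conjI notI)
  show "spectre sierpinski_carpet = {(0, 0)}"
    by (rule spectre_carpet)
  assume "\<exists>v :: nat \<Rightarrow> real \<times> real. summable (\<lambda>n. norm (v n)) \<and>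
      sierpinski_carpet = achievement_set v"
  then obtain v :: "nat \<Rightarrow> real \<times> real"
    where v: "summable (\<lambda>n. norm (v n))" "sierpinski_carpet = achievement_set v"
    by blast
  have "v n = 0" for n
    using term_mem_spectre_achievement_set[OF v(1), of n] spectre_carpet v(2)
    by (simp add: zero_prod_def)
  then have "v = (\<lambda>_. 0)"
    by blast
  then have "sierpinski_carpet = {0}"
    using v(2) achievement_set_zero by simp
  then have "(0, 1) \<in> {0 :: real \<times> real}"
    using zero_one_mem_carpet by simp
  then show False
    by (simp add: zero_prod_def)
qed

end
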